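(* There exists a locally finite quasi-transitive tree that has no periodic proper edge-coloring.
   Context: Locally finite: all degrees finite; quasi-transitive: finitely many automorphism orbits on vertices. A proper edge-coloring assigns distinct colors to edges sharing a vertex; it is periodic if the subgroup of automorphisms mapping every edge to an edge of the same color has finitely many orbits on the vertex set. *)

theory Defs
  imports Main
begin

definition simple_graph :: "'v set \<Rightarrow> ('v \<Rightarrow> 'v \<Rightarrow> bool) \<Rightarrow> bool" where
  "simple_graph V E \<longleftrightarrow>
     (\<forall>u v. E u v \<longrightarrow> u \<in> V \<and> v \<in> V) \<and>
     (\<forall>u v. E u v \<longrightarrow> E v u) \<and>
     (\<forall>v. \<not> E v v)"

definition connected_graph :: "'v set \<Rightarrow> ('v \<Rightarrow> 'v \<Rightarrow> bool) \<Rightarrow> bool" where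
  "connected_graph V E \<longleftrightarrow> V \<noteq> {} \<and> (\<forall>u\<in>V. \<forall>v\<in>V. E\<^sup>*\<^sup>* u v)"

definition is_cycle :: "('v \<Rightarrow> 'v \<Rightarrow> bool) \<Rightarrow> 'v list \<Rightarrow> bool" where
  "is_cycle E xs \<longleftrightarrow> length xs \<ge> 3 \<and> distinct xs \<and>
     (\<forall>i. Suc i < length xs \<longrightarrow> E (xs ! i) (xs ! Suc i)) \<and>
     E (last xs) (hd xs)"

definition is_tree :: "'v set \<Rightarrow> ('v \<Rightarrow> 'v \<Rightarrow> bool) \<Rightarrow> bool" where
  "is_tree V E \<longleftrightarrow> simple_graph V E \<and> connected_graph V E \<and> (\<nexists>xs. is_cycle E xs)"

definition locally_finite :: "'v set \<Rightarrow> ('v \<Rightarrow> 'v \<Rightarrow> bool) \<Rightarrow> bool" where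
  "locally_finite V E \<longleftrightarrow> (\<forall>v\<in>V. finite {w. E v w})"

definition graph_automorphism :: "'v set \<Rightarrow> ('v \<Rightarrow> 'v \<Rightarrow> bool) \<Rightarrow> ('v \<Rightarrow> 'v) \<Rightarrow> bool" where
  "graph_automorphism V E f \<longleftrightarrow> bij_betw f V V \<and>
     (\<forall>u\<in>V. \<forall>v\<in>V. E (f u) (f v) \<longleftrightarrow> E u v)"

definition orbits :: "'v set \<Rightarrow> ('v \<Rightarrow> 'v) set \<Rightarrow> 'v set set" where
  "orbits V G = {{f v | f. f \<in> G} | v. v \<in> V}"

definition quasi_transitive :: "'v set \<Rightarrow> ('v \<Rightarrow> 'v \<Rightarrow> bool) \<Rightarrow> bool" where
  "quasi_transitive V E \<longleftrightarrow> finite (orbits V {f. graph_automorphism V E f})"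

definition proper_edge_coloring :: "('v \<Rightarrow> 'v \<Rightarrow> bool) \<Rightarrow> ('v set \<Rightarrow> 'c) \<Rightarrow> bool" where
  "proper_edge_coloring E c \<longleftrightarrow>
     (\<forall>u v w. E u v \<and> E u w \<and> v \<noteq> w \<longrightarrow> c {u, v} \<noteq> c {u, w})"

definition color_preserving_automorphisms ::
    "'v set \<Rightarrow> ('v \<Rightarrow> 'v \<Rightarrow> bool) \<Rightarrow> ('v set \<Rightarrow> 'c) \<Rightarrow> ('v \<Rightarrow> 'v) set" where
  "color_preserving_automorphisms V E c =
     {f. graph_automorphism V E f \<and> (\<forall>u v. E u v \<longrightarrow> c {f u, f v} = c {u, v})}"

definition periodic_coloring :: "'v set \<Rightarrow> ('v \<Rightarrow> 'v \<Rightarrow> bool) \<Rightarrow> ('v set \<Rightarrow> 'c) \<Rightarrow> bool" where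
  "periodic_coloring V E c \<longleftrightarrow> finite (orbits V (color_preserving_automorphisms V E c))"

end

theory Submission
  imports Defs "HOL-Library.Countable"
begin

text \<open>
  The example is the binary tree with a distinguished end, decorated by pendant leaves: the
  vertices Node n k sit at level n (an integer) and position k (a natural number), the parent of
  Node n k is Node (n + 1) (k div 2), and every node at level n carries (n mod 3) + 1 leaves.
  Shifting all levels by 3 and flipping positions bitwise along a line are automorphisms, so
  the tree is quasi-transitive. The leaf counts tell level n + 1 apart from level n - 1, so
  every automorphism commutes with the parent map on the nodes.

  A colour-preserving automorphism that fixes a vertex fixes all its neighbours (they are
  told apart by their edge colours) and hence is the identity. If the colour-preserving
  automorphisms had finitely many orbits, the parent map would induce a surjective, hence
  injective, self-map of the finitely many orbits of nodes. Then the two children of a node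
  would lie in one orbit, and an automorphism moving one child to the other would fix their
  common parent, hence be the identity: a contradiction.
\<close>

section \<open>Automorphism groups and orbits\<close>

lemma simple_graph_edgeD:
  "simple_graph V E \<Longrightarrow> E u v \<Longrightarrow> u \<in> V \<and> v \<in> V"
  by (simp add: simple_graph_def)

lemma simple_graph_symp: "simple_graph V E \<Longrightarrow> symp E"
  by (simp add: simple_graph_def symp_def)

definition orbit :: "('v \<Rightarrow> 'v) set \<Rightarrow> 'v \<Rightarrow> 'v set" where
  "orbit G v = {f v | f. f \<in> G}"

lemma orbitI: "f \<in> G \<Longrightarrow> f v \<in> orbit G v"
  by (auto simp: orbit_def)

lemma orbits_eq_image_orbit: "orbits V G = orbit G ` V"
  by (auto simp: orbits_def orbit_def)

definition transformation_group :: "'v set \<Rightarrow> ('v \<Rightarrow> 'v) set \<Rightarrow> bool" where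
  "transformation_group V G \<longleftrightarrow>
     id \<in> G \<and> (\<forall>f\<in>G. \<forall>g\<in>G. f \<circ> g \<in> G) \<and> (\<forall>g\<in>G. inj_on g V \<and> inv_into V g \<in> G)"

lemma orbit_self: "transformation_group V G \<Longrightarrow> v \<in> orbit G v"
  unfolding transformation_group_def orbit_def by (metis (mono_tags) CollectI id_apply)

lemma orbit_apply:
  fixes G :: "('v \<Rightarrow> 'v) set"
  assumes "transformation_group V G" and "g \<in> G" "v \<in> V"
  shows "orbit G (g v) = orbit G v"
proof
  have "f (g v) = (f \<circ> g) v" for f :: "'v \<Rightarrow> 'v"
    by simp
  then show "orbit G (g v) \<subseteq> orbit G v"
    using assms unfolding transformation_group_def orbit_def by blast
  have "f v = (f \<circ> inv_into V g) (g v)" for f :: "'v \<Rightarrow> 'v"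
    using assms by (simp add: transformation_group_def)
  then show "orbit G v \<subseteq> orbit G (g v)"
    using assms unfolding transformation_group_def orbit_def by blast
qed

lemma orbit_eqD:
  "transformation_group V G \<Longrightarrow> orbit G w = orbit G v \<Longrightarrow> \<exists>g\<in>G. w = g v"
  using orbit_self[of V G w] by (auto simp: orbit_def)

lemma graph_automorphism_comp:
  assumes "graph_automorphism V E f" "graph_automorphism V E g"
  shows "graph_automorphism V E (f \<circ> g)"
  using assms bij_betw_trans[of g V V f V] bij_betwE[of g V V]
  by (simp add: graph_automorphism_def)

lemma graph_automorphism_inv_into:
  assumes "graph_automorphism V E f"
  shows "graph_automorphism V E (inv_into V f)"
proof -
  have f: "bij_betw f V V" using assms by (simp add: graph_automorphism_def)
  then have f': "bij_betw (inv_into V f) V V" by (rule bij_betw_inv_into)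
  have "E (inv_into V f u) (inv_into V f v) \<longleftrightarrow> E u v" if "u \<in> V" "v \<in> V" for u v
    using assms that bij_betwE[OF f'] bij_betw_inv_into_right[OF f]
    unfolding graph_automorphism_def by metis
  then show ?thesis using f' by (simp add: graph_automorphism_def)
qed

lemma graph_automorphism_id: "graph_automorphism V E id"
  by (simp add: graph_automorphism_def)

lemma graph_automorphism_image: "graph_automorphism V E f \<Longrightarrow> f ` V = V"
  by (simp add: graph_automorphism_def bij_betw_def)

lemma graph_automorphism_inj_on: "graph_automorphism V E f \<Longrightarrow> inj_on f V"
  by (simp add: graph_automorphism_def bij_betw_def)

lemma transformation_group_automorphisms:
  "transformation_group V {f. graph_automorphism V E f}"
  by (simp add: transformation_group_def graph_automorphism_id graph_automorphism_comp
      graph_automorphism_inv_into graph_automorphism_inj_on)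

lemma quasi_transitiveI:
  assumes "finite R" and "\<And>v. v \<in> V \<Longrightarrow> \<exists>g. graph_automorphism V E g \<and> g v \<in> R"
  shows "quasi_transitive V E"
proof -
  let ?Aut = "{f. graph_automorphism V E f}"
  have "orbit ?Aut ` V \<subseteq> orbit ?Aut ` R"
  proof
    fix X assume "X \<in> orbit ?Aut ` V"
    then obtain v where "v \<in> V" "X = orbit ?Aut v" by blast
    moreover obtain g where "graph_automorphism V E g" "g v \<in> R"
      using assms(2) \<open>v \<in> V\<close> by blast
    ultimately show "X \<in> orbit ?Aut ` R"
      using orbit_apply[OF transformation_group_automorphisms] by (metis image_eqI mem_Collect_eq)
  qed
  then show ?thesis
    using assms(1) unfolding quasi_transitive_def orbits_eq_image_orbit
    by (meson finite_imageI finite_subset)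
qed

lemma neighbours_automorphism:
  assumes "simple_graph V E" "graph_automorphism V E g" "a \<in> V"
  shows "{b. E (g a) b} = g ` {b. E a b}"
proof -
  have "g ` V = V" and E: "\<forall>u\<in>V. \<forall>v\<in>V. E (g u) (g v) \<longleftrightarrow> E u v"
    using assms(2) by (auto simp: graph_automorphism_def bij_betw_def)
  show ?thesis
  proof (intro set_eqI iffI)
    fix x assume "x \<in> {b. E (g a) b}"
    moreover from this obtain b where "b \<in> V" "x = g b"
      using simple_graph_edgeD[OF assms(1)] \<open>g ` V = V\<close> by blast
    ultimately show "x \<in> g ` {b. E a b}"
      using E assms(3) by auto
  next
    fix x assume "x \<in> g ` {b. E a b}"
    then show "x \<in> {b. E (g a) b}"
      using E assms(3) simple_graph_edgeD[OF assms(1)] by auto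
  qed
qed

lemma card_neighbours_automorphism:
  assumes "simple_graph V E" "graph_automorphism V E g" "a \<in> V"
  shows "card {b. E (g a) b} = card {b. E a b}"
proof -
  have "inj_on g {b. E a b}"
    using assms graph_automorphism_inj_on simple_graph_edgeD by (metis inj_on_subset mem_Collect_eq subsetI)
  then show ?thesis
    using neighbours_automorphism[OF assms] by (simp add: card_image)
qed

section \<open>Colour-preserving automorphisms\<close>

lemma transformation_group_color_preserving:
  assumes "simple_graph V E"
  shows "transformation_group V (color_preserving_automorphisms V E c)"
  unfolding transformation_group_def
proof (intro conjI ballI)
  show "id \<in> color_preserving_automorphisms V E c"
    by (simp add: color_preserving_automorphisms_def graph_automorphism_id)
next
  fix f g assume f: "f \<in> color_preserving_automorphisms V E c"
    and g: "g \<in> color_preserving_automorphisms V E c"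
  have "E (g u) (g v)" if "E u v" for u v
    using g that simple_graph_edgeD[OF assms]
    by (simp add: color_preserving_automorphisms_def graph_automorphism_def)
  then show "f \<circ> g \<in> color_preserving_automorphisms V E c"
    using f g by (simp add: color_preserving_automorphisms_def graph_automorphism_comp)
next
  fix g assume g: "g \<in> color_preserving_automorphisms V E c"
  then have aut: "graph_automorphism V E g"
    by (simp add: color_preserving_automorphisms_def)
  then show "inj_on g V"
    by (rule graph_automorphism_inj_on)
  let ?g' = "inv_into V g"
  have aut': "graph_automorphism V E ?g'"
    using aut by (rule graph_automorphism_inv_into)
  have "c {?g' u, ?g' v} = c {u, v}" if "E u v" for u v
  proof -
    have uv: "u \<in> V" "v \<in> V"
      using simple_graph_edgeD[OF assms that] by auto
    then have "E (?g' u) (?g' v)"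
      using aut' that by (simp add: graph_automorphism_def)
    then have "c {g (?g' u), g (?g' v)} = c {?g' u, ?g' v}"
      using g by (simp add: color_preserving_automorphisms_def)
    moreover have "g (?g' u) = u" "g (?g' v) = v"
      using aut uv by (auto simp: graph_automorphism_def bij_betw_inv_into_right)
    ultimately show ?thesis
      by simp
  qed
  then show "?g' \<in> color_preserving_automorphisms V E c"
    using aut' by (simp add: color_preserving_automorphisms_def)
qed

lemma color_preserving_automorphism_fixpoint:
  assumes "simple_graph V E" "connected_graph V E" "proper_edge_coloring E c"
    and g: "g \<in> color_preserving_automorphisms V E c" and x: "x \<in> V" "g x = x" and "y \<in> V"
  shows "g y = y"
proof -
  have aut: "graph_automorphism V E g"
    using g by (simp add: color_preserving_automorphisms_def)
  have "E\<^sup>*\<^sup>* x y"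
    using assms(2) x \<open>y \<in> V\<close> by (simp add: connected_graph_def)
  then show ?thesis
  proof (induction rule: rtranclp_induct)
    case base
    then show ?case using x by simp
  next
    case (step u w)
    have "E (g u) (g w)"
      using aut step(2) simple_graph_edgeD[OF assms(1)] by (simp add: graph_automorphism_def)
    then have "E u (g w)"
      using step(3) by simp
    moreover have "c {g u, g w} = c {u, w}"
      using g step(2) by (simp add: color_preserving_automorphisms_def)
    ultimately show ?case
      using assms(3) step(2,3) unfolding proper_edge_coloring_def by metis
  qed
qed

lemma orbit_eq_if_equivariant_surj:
  fixes G :: "('v \<Rightarrow> 'v) set"
  assumes G: "transformation_group V G"
    and M: "M \<subseteq> V" "p ` M \<subseteq> M" "M \<subseteq> p ` M"
    and equivariant: "\<And>g x. g \<in> G \<Longrightarrow> x \<in> M \<Longrightarrow> g (p x) = p (g x)"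
    and finite: "finite (orbit G ` M)"
    and yz: "y \<in> M" "z \<in> M" "p y = p z"
  shows "orbit G y = orbit G z"
proof -
  have p_orbit: "orbit G (p x') = orbit G (p x)"
    if x: "x \<in> M" "x' \<in> M" "orbit G x' = orbit G x" for x x'
  proof -
    obtain g where g: "g \<in> G" "x' = g x"
      using orbit_eqD[OF G x(3)] by blast
    have "p x \<in> V"
      using M x(1) by blast
    with g have "orbit G (g (p x)) = orbit G (p x)"
      by (intro orbit_apply[OF G])
    then show ?thesis
      using equivariant[OF g(1) x(1)] g(2) by simp
  qed
  define S where "S = orbit G ` M"
  define Q where "Q A = orbit G (p (inv_into M (orbit G) A))" for A
  have Q: "Q (orbit G x) = orbit G (p x)" if "x \<in> M" for x
  proof -
    let ?x' = "inv_into M (orbit G) (orbit G x)"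
    have "orbit G x \<in> orbit G ` M"
      using that by blast
    then have "?x' \<in> M" "orbit G ?x' = orbit G x"
      by (rule inv_into_into, rule f_inv_into_f)
    then show ?thesis
      unfolding Q_def using p_orbit[OF that] by blast
  qed
  have "S \<subseteq> Q ` S"
  proof
    fix A assume "A \<in> S"
    then obtain x where "x \<in> M" "A = orbit G x"
      by (auto simp: S_def)
    moreover obtain x' where "x' \<in> M" "p x' = x"
      using M(3) \<open>x \<in> M\<close> by blast
    ultimately have "A = Q (orbit G x')" "orbit G x' \<in> S"
      using Q by (simp_all add: S_def)
    then show "A \<in> Q ` S"
      by blast
  qed
  moreover have "finite S"
    using finite by (simp add: S_def)
  ultimately have "inj_on Q S"
    by (intro finite_surj_inj)
  moreover have "Q (orbit G y) = Q (orbit G z)" "orbit G y \<in> S" "orbit G z \<in> S"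
    using Q yz by (simp_all add: S_def)
  ultimately show ?thesis
    by (rule inj_onD)
qed

lemma not_periodic_coloring_if_invariant_branching:
  assumes sg: "simple_graph V E" and conn: "connected_graph V E"
    and proper: "proper_edge_coloring E c"
    and M: "M \<subseteq> V" "M \<noteq> {}" "p ` M \<subseteq> M"
    and branching: "\<And>x. x \<in> M \<Longrightarrow> \<exists>y z. y \<in> M \<and> z \<in> M \<and> y \<noteq> z \<and> p y = x \<and> p z = x"
    and invariant: "\<And>g x. graph_automorphism V E g \<Longrightarrow> x \<in> M \<Longrightarrow> g x \<in> M \<and> g (p x) = p (g x)"
  shows "\<not> periodic_coloring V E c"
proof
  assume periodic: "periodic_coloring V E c"
  define G where "G = color_preserving_automorphisms V E c"
  have G: "transformation_group V G"
    unfolding G_def using sg by (rule transformation_group_color_preserving)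
  have aut: "graph_automorphism V E g" if "g \<in> G" for g
    using that by (simp add: G_def color_preserving_automorphisms_def)
  have "orbit G ` M \<subseteq> orbits V G"
    unfolding orbits_eq_image_orbit using M(1) by (rule image_mono)
  then have "finite (orbit G ` M)"
    using periodic finite_subset by (auto simp: G_def periodic_coloring_def)
  moreover have "M \<subseteq> p ` M"
    using branching by blast
  moreover obtain x where "x \<in> M"
    using M(2) by blast
  then obtain y z where yz: "y \<in> M" "z \<in> M" "y \<noteq> z" "p y = x" "p z = x"
    using branching by blast
  moreover have "g (p x) = p (g x)" if "g \<in> G" "x \<in> M" for g x
    using invariant[OF aut] that by blast
  ultimately have "orbit G z = orbit G y"
    using yz by (intro orbit_eq_if_equivariant_surj[OF G M(1,3)]) simp_all
  then obtain g where g: "g \<in> G" "z = g y"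
    using orbit_eqD[OF G] by blast
  then have "g x = x"
    using invariant[OF aut[OF g(1)] yz(1)] yz(4,5) by simp
  then have "g y = y"
    using color_preserving_automorphism_fixpoint[OF sg conn proper g(1)[unfolded G_def]]
      M(1) yz(1) \<open>x \<in> M\<close> by blast
  then show False
    using g yz(3) by simp
qed

section \<open>Acyclicity from a parent map\<close>

lemma is_cycle_neighbours:
  assumes "is_cycle E xs" "x \<in> set xs"
  obtains y z where "y \<in> set xs" "z \<in> set xs" "y \<noteq> z" "E x y" "E z x"
proof -
  define L where "L = length xs"
  have L: "3 \<le> L" and "distinct xs"
    using assms(1) by (auto simp: is_cycle_def L_def)
  have step: "E (xs ! i) (xs ! (Suc i mod L))" if "i < L" for i
  proof (cases "Suc i < L")
    case True
    then show ?thesis using assms(1) by (simp add: is_cycle_def L_def)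
  next
    case False
    then have "Suc i = L"
      using that by simp
    then have "i = L - 1" "Suc i mod L = 0"
      by auto
    moreover have "xs \<noteq> []"
      using L by (auto simp: L_def)
    ultimately have "xs ! i = last xs" "xs ! (Suc i mod L) = hd xs"
      by (simp_all add: L_def last_conv_nth hd_conv_nth)
    then show ?thesis using assms(1) by (simp add: is_cycle_def)
  qed
  obtain j where j: "j < L" "x = xs ! j"
    using assms(2) by (auto simp: in_set_conv_nth L_def)
  define i where "i = (j + L - 1) mod L"
  have "i < L" "Suc i mod L = j"
    using L j(1) by (simp_all add: i_def mod_Suc_eq)
  moreover have "Suc j mod L \<noteq> i"
    using L j(1) unfolding i_def by (cases "Suc j = L"; cases j) (auto simp: mod_if)
  moreover have "Suc j mod L < L"
    using L by simp
  ultimately have "xs ! (Suc j mod L) \<noteq> xs ! i"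
    using \<open>distinct xs\<close> by (simp add: L_def nth_eq_iff_index_eq)
  moreover have "xs ! (Suc j mod L) \<in> set xs" "xs ! i \<in> set xs"
    using \<open>Suc j mod L < L\<close> \<open>i < L\<close> by (simp_all add: L_def)
  ultimately show ?thesis
    using that step[of j] step[of i] j \<open>i < L\<close> \<open>Suc i mod L = j\<close> by simp
qed

text \<open>A lowest vertex of a cycle would have both of its cycle neighbours equal to its parent.\<close>

lemma no_cycle_if_parent_height:
  fixes height :: "'v \<Rightarrow> 'h::linorder"
  assumes edge: "\<And>u v. E u v \<Longrightarrow> v = parent u \<or> u = parent v"
    and height: "\<And>u. height u < height (parent u)"
  shows "\<not> is_cycle E xs"
proof
  assume cycle: "is_cycle E xs"
  then have "set xs \<noteq> {}"
    by (auto simp: is_cycle_def)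
  define x where "x = arg_min_on height (set xs)"
  have x: "x \<in> set xs" and lowest: "\<And>y. y \<in> set xs \<Longrightarrow> \<not> height y < height x"
    using arg_min_if_finite[OF finite_set \<open>set xs \<noteq> {}\<close>] unfolding x_def by auto
  obtain y z where yz: "y \<in> set xs" "z \<in> set xs" "y \<noteq> z" "E x y" "E z x"
    using is_cycle_neighbours[OF cycle x] by blast
  have "y = parent x" "z = parent x"
    using edge[OF yz(4)] edge[OF yz(5)] height lowest[OF yz(1)] lowest[OF yz(2)] by auto
  then show False
    using yz(3) by simp
qed

section \<open>Renaming the vertices\<close>

definition map_graph :: "('a \<Rightarrow> 'b) \<Rightarrow> ('a \<Rightarrow> 'a \<Rightarrow> bool) \<Rightarrow> 'b \<Rightarrow> 'b \<Rightarrow> bool" where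
  "map_graph h E u v \<longleftrightarrow> (\<exists>a b. E a b \<and> u = h a \<and> v = h b)"

lemma map_graph_apply [simp]: "inj h \<Longrightarrow> map_graph h E (h a) (h b) \<longleftrightarrow> E a b"
  by (auto simp: map_graph_def inj_eq)

lemma map_graphE:
  assumes "map_graph h E u v"
  obtains a b where "u = h a" "v = h b" "E a b"
  using assms by (auto simp: map_graph_def)

lemma map_graph_inv:
  assumes "inj h" "map_graph h E u v"
  shows "E (inv h u) (inv h v)" "u \<in> range h"
  using assms(2) by (auto elim!: map_graphE simp: inv_f_f[OF assms(1)])

lemma simple_graph_map_graph:
  "inj h \<Longrightarrow> simple_graph V E \<Longrightarrow> simple_graph (h ` V) (map_graph h E)"
  unfolding simple_graph_def by (auto elim!: map_graphE dest: injD)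

lemma connected_graph_map_graph:
  assumes "inj h" "connected_graph V E"
  shows "connected_graph (h ` V) (map_graph h E)"
proof -
  have "(map_graph h E)\<^sup>*\<^sup>* (h a) (h b)" if "E\<^sup>*\<^sup>* a b" for a b
    using that by (induction rule: rtranclp_induct)
      (auto intro: rtranclp.rtrancl_into_rtrancl simp: assms(1))
  then show ?thesis
    using assms(2) by (auto simp: connected_graph_def)
qed

lemma is_cycle_map_graph:
  assumes "inj h" "is_cycle (map_graph h E) xs"
  shows "is_cycle E (map (inv h) xs)"
proof -
  have "set xs \<subseteq> range h"
  proof
    fix x assume "x \<in> set xs"
    then obtain y where "map_graph h E x y"
      using is_cycle_neighbours[OF assms(2)] by metis
    then show "x \<in> range h"
      using map_graph_inv[OF assms(1)] by blast
  qed
  then have "inj_on (inv h) (set xs)"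
    by (rule inj_on_inv_into)
  moreover have "xs \<noteq> []"
    using assms(2) by (auto simp: is_cycle_def)
  moreover have "E (inv h u) (inv h v)" if "map_graph h E u v" for u v
    using assms(1) that by (rule map_graph_inv)
  ultimately show ?thesis
    using assms(2) by (auto simp: is_cycle_def distinct_map hd_map last_map)
qed

lemma is_tree_map_graph:
  "inj h \<Longrightarrow> is_tree V E \<Longrightarrow> is_tree (h ` V) (map_graph h E)"
  using simple_graph_map_graph connected_graph_map_graph is_cycle_map_graph
  unfolding is_tree_def by blast

lemma locally_finite_map_graph:
  assumes "inj h" "locally_finite V E"
  shows "locally_finite (h ` V) (map_graph h E)"
proof -
  have "{w. map_graph h E (h a) w} = h ` {b. E a b}" for a
    using assms(1) by (auto elim!: map_graphE simp: inj_eq)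
  then show ?thesis
    using assms(2) by (auto simp: locally_finite_def)
qed

lemma graph_automorphism_map_graph:
  assumes "inj h" "graph_automorphism V E f"
  shows "graph_automorphism (h ` V) (map_graph h E) (h \<circ> f \<circ> inv h)"
proof -
  have "bij_betw (h \<circ> (f \<circ> inv h)) (h ` V) (h ` V)"
    using assms inj_imp_bij_betw_inv[OF assms(1)] inj_on_imp_bij_betw[OF inj_on_subset[OF assms(1)]]
    by (auto simp: graph_automorphism_def intro!: bij_betw_trans)
  moreover have "map_graph h E (h (f a)) (h (f b)) \<longleftrightarrow> map_graph h E (h a) (h b)"
    if "a \<in> V" "b \<in> V" for a b
    using assms that by (simp add: graph_automorphism_def)
  ultimately show ?thesis
    by (auto simp: graph_automorphism_def comp_assoc inv_f_f[OF assms(1)])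
qed

lemma graph_automorphism_map_graph_inv:
  assumes "inj h" "graph_automorphism (h ` V) (map_graph h E) g"
  shows "graph_automorphism V E (inv h \<circ> g \<circ> h)"
proof -
  have g: "bij_betw g (h ` V) (h ` V)"
    and E: "\<forall>u\<in>h ` V. \<forall>v\<in>h ` V. map_graph h E (g u) (g v) \<longleftrightarrow> map_graph h E u v"
    using assms(2) by (auto simp: graph_automorphism_def)
  have "bij_betw (inv h \<circ> (g \<circ> h)) V V"
    using g inj_imp_bij_betw_inv[OF assms(1)] inj_on_imp_bij_betw[OF inj_on_subset[OF assms(1)]]
    by (auto intro!: bij_betw_trans)
  moreover have "E (inv h (g (h a))) (inv h (g (h b))) \<longleftrightarrow> E a b" if ab: "a \<in> V" "b \<in> V" for a b
  proof -
    have "map_graph h E (g (h a)) (g (h b)) \<longleftrightarrow> E a b"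
      using E ab assms(1) by simp
    moreover obtain a' b' where "g (h a) = h a'" "g (h b) = h b'"
      using bij_betwE[OF g] ab by blast
    ultimately show ?thesis
      using assms(1) by (simp add: inv_f_f)
  qed
  ultimately show ?thesis
    by (simp add: graph_automorphism_def comp_assoc)
qed

lemma finite_orbits_map_graph:
  assumes "inj h"
    and push: "\<And>f. f \<in> G \<Longrightarrow> h \<circ> f \<circ> inv h \<in> G'"
    and pull: "\<And>g. g \<in> G' \<Longrightarrow> inv h \<circ> g \<circ> h \<in> G"
    and into: "\<And>g. g \<in> G' \<Longrightarrow> g ` h ` V = h ` V"
  shows "finite (orbits (h ` V) G') \<longleftrightarrow> finite (orbits V G)"
proof -
  have "orbit G' (h v) = h ` orbit G v" if "v \<in> V" for v
  proof
    show "orbit G' (h v) \<subseteq> h ` orbit G v"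
    proof
      fix w assume "w \<in> orbit G' (h v)"
      then obtain g where g: "g \<in> G'" "w = g (h v)"
        by (auto simp: orbit_def)
      have "g (h v) \<in> range h"
        using into[OF g(1)] \<open>v \<in> V\<close> by blast
      moreover have "(inv h \<circ> g \<circ> h) v \<in> orbit G v"
        using pull[OF g(1)] by (blast intro: orbitI)
      ultimately show "w \<in> h ` orbit G v"
        using g(2) by (metis comp_apply f_inv_into_f image_eqI)
    qed
    show "h ` orbit G v \<subseteq> orbit G' (h v)"
    proof
      fix w assume "w \<in> h ` orbit G v"
      then obtain f where "f \<in> G" "w = h (f v)"
        by (auto simp: orbit_def)
      then show "w \<in> orbit G' (h v)"
        using orbitI[OF push[OF \<open>f \<in> G\<close>], of "h v"] by (simp add: inv_f_f[OF assms(1)])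
    qed
  qed
  then have "orbits (h ` V) G' = (`) h ` orbits V G"
    by (simp add: orbits_eq_image_orbit image_image)
  moreover have "inj_on ((`) h) (orbits V G)"
    using assms(1) by (simp add: inj_on_def inj_image_eq_iff)
  ultimately show ?thesis
    by (simp add: finite_image_iff)
qed

lemma quasi_transitive_map_graph:
  assumes "inj h" "quasi_transitive V E"
  shows "quasi_transitive (h ` V) (map_graph h E)"
proof -
  let ?Aut = "{f. graph_automorphism V E f}"
    and ?Aut' = "{g. graph_automorphism (h ` V) (map_graph h E) g}"
  have "finite (orbits (h ` V) ?Aut') \<longleftrightarrow> finite (orbits V ?Aut)"
  proof (rule finite_orbits_map_graph[OF assms(1)])
    show "h \<circ> f \<circ> inv h \<in> ?Aut'" if "f \<in> ?Aut" for f
      using that graph_automorphism_map_graph[OF assms(1)] by simp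
    show "inv h \<circ> g \<circ> h \<in> ?Aut" if "g \<in> ?Aut'" for g
      using that graph_automorphism_map_graph_inv[OF assms(1)] by simp
    show "g ` h ` V = h ` V" if "g \<in> ?Aut'" for g
      using that graph_automorphism_image by blast
  qed
  then show ?thesis
    using assms(2) by (simp add: quasi_transitive_def)
qed

lemma proper_edge_coloring_map_graph:
  assumes "inj h" "proper_edge_coloring (map_graph h E) c"
  shows "proper_edge_coloring E (\<lambda>S. c (h ` S))"
  using assms by (auto simp: proper_edge_coloring_def inj_eq)

lemma color_preserving_automorphism_map_graph:
  assumes "inj h" "f \<in> color_preserving_automorphisms V E (\<lambda>S. c (h ` S))"
  shows "h \<circ> f \<circ> inv h \<in> color_preserving_automorphisms (h ` V) (map_graph h E) c"
  using assms graph_automorphism_map_graph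
  by (auto simp: color_preserving_automorphisms_def inv_f_f elim!: map_graphE)

lemma color_preserving_automorphism_map_graph_inv:
  assumes "inj h" "simple_graph V E"
    and g: "g \<in> color_preserving_automorphisms (h ` V) (map_graph h E) c"
  shows "inv h \<circ> g \<circ> h \<in> color_preserving_automorphisms V E (\<lambda>S. c (h ` S))"
proof -
  have aut: "graph_automorphism (h ` V) (map_graph h E) g"
    using g by (simp add: color_preserving_automorphisms_def)
  have "c (h ` {inv h (g (h a)), inv h (g (h b))}) = c (h ` {a, b})" if "E a b" for a b
  proof -
    have "a \<in> V" "b \<in> V"
      using simple_graph_edgeD[OF assms(2) that] by auto
    then have "g (h a) \<in> range h" "g (h b) \<in> range h"
      using graph_automorphism_image[OF aut] by blast+
    then have "h (inv h (g (h a))) = g (h a)" "h (inv h (g (h b))) = g (h b)"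
      by (simp_all add: f_inv_into_f)
    moreover have "c {g (h a), g (h b)} = c {h a, h b}"
      using g that assms(1) by (simp add: color_preserving_automorphisms_def)
    ultimately show ?thesis
      by simp
  qed
  then show ?thesis
    using graph_automorphism_map_graph_inv[OF assms(1) aut]
    by (simp add: color_preserving_automorphisms_def)
qed

lemma periodic_coloring_map_graph:
  assumes "inj h" "simple_graph V E" "periodic_coloring (h ` V) (map_graph h E) c"
  shows "periodic_coloring V E (\<lambda>S. c (h ` S))"
proof -
  let ?G = "color_preserving_automorphisms V E (\<lambda>S. c (h ` S))"
    and ?G' = "color_preserving_automorphisms (h ` V) (map_graph h E) c"
  have "finite (orbits (h ` V) ?G') \<longleftrightarrow> finite (orbits V ?G)"
  proof (rule finite_orbits_map_graph[OF assms(1)])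
    show "h \<circ> f \<circ> inv h \<in> ?G'" if "f \<in> ?G" for f
      using assms(1) that by (rule color_preserving_automorphism_map_graph)
    show "inv h \<circ> g \<circ> h \<in> ?G" if "g \<in> ?G'" for g
      using assms(1,2) that by (rule color_preserving_automorphism_map_graph_inv)
    show "g ` h ` V = h ` V" if "g \<in> ?G'" for g
      using that graph_automorphism_image[of "h ` V" "map_graph h E" g]
      by (simp add: color_preserving_automorphisms_def)
  qed
  then show ?thesis
    using assms(3) by (simp add: periodic_coloring_def)
qed

section \<open>A quasi-transitive tree whose automorphisms fix an end\<close>

datatype vertex = Node int nat | Leaf int nat nat

instance vertex :: countable
  by countable_datatype

definition leaf_count :: "int \<Rightarrow> nat" where
  "leaf_count n = nat (n mod 3) + 1"

definition vertices :: "vertex set" where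
  "vertices = {Node n k | n k. True} \<union> {Leaf n k i | n k i. i < leaf_count n}"

fun parent :: "vertex \<Rightarrow> vertex" where
  "parent (Node n k) = Node (n + 1) (k div 2)"
| "parent (Leaf n k i) = Node n k"

fun vertex_height :: "vertex \<Rightarrow> int" where
  "vertex_height (Node n k) = 2 * n + 1"
| "vertex_height (Leaf n k i) = 2 * n"

definition adj :: "vertex \<Rightarrow> vertex \<Rightarrow> bool" where
  "adj a b \<longleftrightarrow> a \<in> vertices \<and> b \<in> vertices \<and> (b = parent a \<or> a = parent b)"

lemma Node_in_vertices [simp]: "Node n k \<in> vertices"
  by (simp add: vertices_def)

lemma Leaf_in_vertices [simp]: "Leaf n k i \<in> vertices \<longleftrightarrow> i < leaf_count n"
  by (simp add: vertices_def)

lemma vertex_height_parent: "vertex_height a < vertex_height (parent a)"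
  by (cases a) simp_all

lemma parent_not_Leaf [simp]: "parent a \<noteq> Leaf n k i" "Leaf n k i \<noteq> parent a"
  by (cases a; simp)+

lemma simple_graph_adj: "simple_graph vertices adj"
proof -
  have "parent a \<noteq> a" "a \<noteq> parent a" for a
    by (cases a; simp)+
  then show ?thesis
    by (auto simp: simple_graph_def adj_def)
qed

lemma neighbours_Node:
  "{b. adj (Node n k) b} =
     {Node (n + 1) (k div 2), Node (n - 1) (2 * k), Node (n - 1) (2 * k + 1)} \<union>
     Leaf n k ` {..<leaf_count n}"
proof (intro set_eqI)
  fix b
  show "b \<in> {b. adj (Node n k) b} \<longleftrightarrow> b \<in> {Node (n + 1) (k div 2), Node (n - 1) (2 * k),
      Node (n - 1) (2 * k + 1)} \<union> Leaf n k ` {..<leaf_count n}"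
  proof (cases b)
    case (Node m j)
    have "n = m + 1 \<and> k = j div 2 \<longleftrightarrow> m = n - 1 \<and> (j = 2 * k \<or> j = 2 * k + 1)"
      by presburger
    then show ?thesis
      using Node by (auto simp: adj_def)
  next
    case (Leaf m j i)
    then show ?thesis
      by (auto simp: adj_def)
  qed
qed

lemma neighbours_Leaf: "i < leaf_count n \<Longrightarrow> {b. adj (Leaf n k i) b} = {Node n k}"
  by (auto simp: adj_def elim: parent.elims)

lemma card_neighbours_Node: "card {b. adj (Node n k) b} = 3 + leaf_count n"
proof -
  have "card (Leaf n k ` {..<leaf_count n}) = leaf_count n"
    by (simp add: card_image inj_on_def)
  then show ?thesis
    unfolding neighbours_Node by (subst card_Un_disjoint) auto
qed

lemma locally_finite_adj: "locally_finite vertices adj"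
  unfolding locally_finite_def
proof
  fix a assume "a \<in> vertices"
  then show "finite {b. adj a b}"
    by (cases a) (simp_all add: neighbours_Node neighbours_Leaf)
qed

lemma adj_rtranclp_ancestor: "adj\<^sup>*\<^sup>* (Node n k) (Node (n + int m) (k div 2 ^ m))"
proof (induction m)
  case 0
  then show ?case by simp
next
  case (Suc m)
  have "adj (Node (n + int m) (k div 2 ^ m)) (Node (n + int (Suc m)) (k div 2 ^ Suc m))"
    by (simp add: adj_def div_mult2_eq power_Suc2 del: power_Suc)
  with Suc.IH show ?case
    by (rule rtranclp.rtrancl_into_rtrancl)
qed

lemma adj_rtranclp_top:
  assumes "a \<in> vertices"
  shows "\<exists>N0. \<forall>N\<ge>N0. adj\<^sup>*\<^sup>* a (Node N 0)"
proof -
  have top: "adj\<^sup>*\<^sup>* (Node n k) (Node N 0)" if "n + int k \<le> N" for n k N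
  proof -
    define m where "m = nat (N - n)"
    have "k < 2 ^ m"
      using that less_exp[of k] power_increasing[of k m "2::nat"] unfolding m_def by linarith
    then show ?thesis
      using adj_rtranclp_ancestor[of n k m] that by (simp add: m_def)
  qed
  show ?thesis
  proof (cases a)
    case (Node n k)
    show ?thesis
      by (intro exI[of _ "n + int k"] allI impI) (simp add: Node top)
  next
    case (Leaf n k i)
    then have "adj a (Node n k)"
      using assms by (simp add: adj_def)
    show ?thesis
      by (intro exI[of _ "n + int k"] allI impI)
        (rule converse_rtranclp_into_rtranclp[OF \<open>adj a (Node n k)\<close> top])
  qed
qed

lemma connected_graph_adj: "connected_graph vertices adj"
  unfolding connected_graph_def
proof (intro conjI ballI)
  show "vertices \<noteq> {}"
    using Node_in_vertices[of 0 0] by blast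
next
  fix a b assume "a \<in> vertices" "b \<in> vertices"
  obtain Na where Na: "\<And>N. Na \<le> N \<Longrightarrow> adj\<^sup>*\<^sup>* a (Node N 0)"
    using adj_rtranclp_top[OF \<open>a \<in> vertices\<close>] by blast
  obtain Nb where Nb: "\<And>N. Nb \<le> N \<Longrightarrow> adj\<^sup>*\<^sup>* b (Node N 0)"
    using adj_rtranclp_top[OF \<open>b \<in> vertices\<close>] by blast
  have "symp adj\<^sup>*\<^sup>*"
    by (rule symp_rtranclp[OF simple_graph_symp[OF simple_graph_adj]])
  then have "adj\<^sup>*\<^sup>* (Node (max Na Nb) 0) b"
    using Nb[OF max.cobounded2] by (rule sympD)
  with Na[OF max.cobounded1] show "adj\<^sup>*\<^sup>* a b"
    by (rule rtranclp_trans)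
qed

lemma is_tree_adj: "is_tree vertices adj"
proof -
  have "\<not> is_cycle adj xs" for xs
    by (rule no_cycle_if_parent_height[where parent = parent and height = vertex_height])
      (auto simp: adj_def vertex_height_parent)
  then show ?thesis
    by (simp add: is_tree_def simple_graph_adj connected_graph_adj)
qed

lemma automorphism_Node:
  assumes "graph_automorphism vertices adj g"
  obtains n' k' where "g (Node n k) = Node n' k'" "n' mod 3 = n mod 3"
proof -
  have "g (Node n k) \<in> vertices"
    using assms by (auto simp: graph_automorphism_def dest: bij_betwE)
  have degree: "card {b. adj (g (Node n k)) b} = 3 + leaf_count n"
    using card_neighbours_automorphism[OF simple_graph_adj assms Node_in_vertices]
    by (simp add: card_neighbours_Node)
  show ?thesis
  proof (cases "g (Node n k)")
    case (Node n' k')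
    then have "leaf_count n' = leaf_count n"
      using degree by (simp add: card_neighbours_Node)
    then have "n' mod 3 = n mod 3"
      by (simp add: leaf_count_def)
    with Node show ?thesis
      by (rule that)
  next
    case (Leaf m j i)
    then show ?thesis
      using degree \<open>g (Node n k) \<in> vertices\<close> by (simp add: neighbours_Leaf)
  qed
qed

lemma automorphism_parent:
  assumes aut: "graph_automorphism vertices adj g"
  shows "g (parent (Node n k)) = parent (g (Node n k))"
proof -
  obtain n' k' where g: "g (Node n k) = Node n' k'" "n' mod 3 = n mod 3"
    using aut by (rule automorphism_Node)
  obtain m j where g_parent: "g (Node (n + 1) (k div 2)) = Node m j" "m mod 3 = (n + 1) mod 3"
    using aut by (rule automorphism_Node)
  have "adj (Node n k) (Node (n + 1) (k div 2))"
    by (simp add: adj_def)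
  then have "adj (g (Node n k)) (g (Node (n + 1) (k div 2)))"
    using aut by (simp add: graph_automorphism_def)
  then have "adj (Node n' k') (Node m j)"
    using g g_parent by simp
  then have "m = n' + 1 \<and> j = k' div 2 \<or> n' = m + 1 \<and> k' = j div 2"
    by (auto simp: adj_def)
  moreover have "n' \<noteq> m + 1"
    using g(2) g_parent(2) by presburger
  ultimately show ?thesis
    using g g_parent by auto
qed

lemma graph_automorphism_adjI:
  assumes inverse: "\<And>a. f' (f a) = a" "\<And>a. f (f' a) = a"
    and closed: "\<And>a. a \<in> vertices \<Longrightarrow> f a \<in> vertices" "\<And>a. a \<in> vertices \<Longrightarrow> f' a \<in> vertices"
    and parent: "\<And>a. parent (f a) = f (parent a)"
  shows "graph_automorphism vertices adj f"
proof -
  have "inj f"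
    using inverse(1) by (metis injI)
  then have "adj (f u) (f v) \<longleftrightarrow> adj u v" if "u \<in> vertices" "v \<in> vertices" for u v
    using that closed(1) parent by (auto simp: adj_def inj_eq)
  moreover have "bij_betw f vertices vertices"
    using inverse closed by (intro bij_betw_byWitness[where f' = f']) auto
  ultimately show ?thesis
    by (simp add: graph_automorphism_def)
qed

lemma xor_div_2: "xor a b div 2 = xor (a div 2) (b div 2 :: nat)"
  using drop_bit_xor[of 1 a b] by (simp add: drop_bit_eq_div)

fun flip_positions :: "(int \<Rightarrow> nat) \<Rightarrow> vertex \<Rightarrow> vertex" where
  "flip_positions t (Node m j) = Node m (xor j (t m))"
| "flip_positions t (Leaf m j i) = Leaf m (xor j (t m)) i"

lemma graph_automorphism_flip_positions:
  assumes "\<And>m. t (m + 1) = t m div 2"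
  shows "graph_automorphism vertices adj (flip_positions t)"
proof (rule graph_automorphism_adjI[where f' = "flip_positions t"])
  fix a
  show "flip_positions t (flip_positions t a) = a"
    by (cases a) (simp_all add: xor.assoc)
  then show "flip_positions t (flip_positions t a) = a" .
  show "a \<in> vertices \<Longrightarrow> flip_positions t a \<in> vertices"
    by (cases a) simp_all
  then show "a \<in> vertices \<Longrightarrow> flip_positions t a \<in> vertices" .
  show "parent (flip_positions t a) = flip_positions t (parent a)"
    by (cases a) (simp_all add: assms xor_div_2)
qed

lemma leaf_count_shift: "leaf_count (m + 3 * d) = leaf_count m"
  by (simp add: leaf_count_def)

fun shift_levels :: "int \<Rightarrow> vertex \<Rightarrow> vertex" where
  "shift_levels d (Node m j) = Node (m + 3 * d) j"
| "shift_levels d (Leaf m j i) = Leaf (m + 3 * d) j i"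

lemma graph_automorphism_shift_levels: "graph_automorphism vertices adj (shift_levels d)"
proof (rule graph_automorphism_adjI[where f' = "shift_levels (- d)"])
  fix a
  show "shift_levels (- d) (shift_levels d a) = a"
    by (cases a) simp_all
  show "shift_levels d (shift_levels (- d) a) = a"
    by (cases a) simp_all
  show "a \<in> vertices \<Longrightarrow> shift_levels d a \<in> vertices"
    by (cases a) (simp_all add: leaf_count_shift)
  show "a \<in> vertices \<Longrightarrow> shift_levels (- d) a \<in> vertices"
    by (cases a) (simp_all add: leaf_count_shift[of _ "- d", simplified])
  show "parent (shift_levels d a) = shift_levels d (parent a)"
    by (cases a) simp_all
qed

text \<open>Position at level m on the line through Node n k formed by its ancestors and its
  leftmost descendants; XOR-ing positions with it moves Node n k to Node n 0.\<close>

definition line_position :: "int \<Rightarrow> nat \<Rightarrow> int \<Rightarrow> nat" where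
  "line_position n k m = (if m \<le> n then k * 2 ^ nat (n - m) else k div 2 ^ nat (m - n))"

lemma line_position_succ: "line_position n k (m + 1) = line_position n k m div 2"
proof (cases "m + 1 \<le> n")
  case True
  then have "nat (n - m) = Suc (nat (n - (m + 1)))"
    by simp
  with True show ?thesis
    by (simp add: line_position_def)
next
  case False
  then have "m = n \<or> nat (m + 1 - n) = Suc (nat (m - n))"
    by auto
  with False show ?thesis
    by (auto simp: line_position_def div_mult2_eq power_Suc2 simp del: power_Suc)
qed

lemma quasi_transitive_adj: "quasi_transitive vertices adj"
proof (rule quasi_transitiveI)
  let ?R = "(\<lambda>r. Node r 0) ` {0..2} \<union> (\<lambda>(r, i). Leaf r 0 i) ` ({0..2} \<times> {..<3})"
  show "finite ?R"
    by simp
  fix a assume "a \<in> vertices"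
  define g where "g n k = shift_levels (- (n div 3)) \<circ> flip_positions (line_position n k)" for n k
  have aut: "graph_automorphism vertices adj (g n k)" for n k
    unfolding g_def
    by (intro graph_automorphism_comp graph_automorphism_shift_levels
        graph_automorphism_flip_positions line_position_succ)
  have level: "n mod 3 \<in> {0..2}" for n :: int
    by auto
  show "\<exists>g. graph_automorphism vertices adj g \<and> g a \<in> ?R"
  proof (cases a)
    case (Node n k)
    then have "g n k a = Node (n mod 3) 0"
      by (simp add: g_def line_position_def minus_mult_div_eq_mod)
    then have "g n k a \<in> ?R"
      using level by blast
    with aut show ?thesis
      by blast
  next
    case (Leaf n k i)
    then have "i < 3"
      using \<open>a \<in> vertices\<close> by (simp add: leaf_count_def)
    then have "(n mod 3, i) \<in> {0..2} \<times> {..<3}"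
      using level by simp
    then have "Leaf (n mod 3) 0 i \<in> ?R"
      by (rule UnI2[OF rev_image_eqI]) simp
    moreover have "g n k a = Leaf (n mod 3) 0 i"
      using Leaf by (simp add: g_def line_position_def minus_mult_div_eq_mod)
    ultimately have "g n k a \<in> ?R"
      by simp
    with aut show ?thesis
      by blast
  qed
qed

lemma not_periodic_coloring_adj:
  assumes "proper_edge_coloring adj c"
  shows "\<not> periodic_coloring vertices adj c"
proof (rule not_periodic_coloring_if_invariant_branching[OF simple_graph_adj connected_graph_adj assms])
  let ?M = "{Node n k | n k. True}"
  show "?M \<subseteq> vertices" "?M \<noteq> {}" "parent ` ?M \<subseteq> ?M"
    by auto
  show "\<exists>y z. y \<in> ?M \<and> z \<in> ?M \<and> y \<noteq> z \<and> parent y = x \<and> parent z = x" if x: "x \<in> ?M" for x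
  proof -
    obtain n k where "x = Node n k"
      using x by blast
    then show ?thesis
      by (intro exI[of _ "Node (n - 1) (2 * k)"] exI[of _ "Node (n - 1) (2 * k + 1)"]) auto
  qed
  show "g x \<in> ?M \<and> g (parent x) = parent (g x)"
    if g: "graph_automorphism vertices adj g" and x: "x \<in> ?M" for g x
  proof -
    obtain n k where "x = Node n k"
      using x by blast
    moreover obtain n' k' where "g (Node n k) = Node n' k'" "n' mod 3 = n mod 3"
      using g by (rule automorphism_Node)
    ultimately show ?thesis
      using automorphism_parent[OF g] by simp
  qed
qed

theorem mainTheorem18:
  shows "\<exists>(V :: nat set) (E :: nat \<Rightarrow> nat \<Rightarrow> bool).
           is_tree V E \<and> locally_finite V E \<and> quasi_transitive V E \<and>
           (\<forall>c :: nat set \<Rightarrow> nat. proper_edge_coloring E c \<longrightarrow> \<not> periodic_coloring V E c)"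
proof -
  let ?V = "to_nat ` vertices" and ?E = "map_graph to_nat adj"
  have "is_tree ?V ?E"
    by (rule is_tree_map_graph[OF inj_to_nat is_tree_adj])
  moreover have "locally_finite ?V ?E"
    by (rule locally_finite_map_graph[OF inj_to_nat locally_finite_adj])
  moreover have "quasi_transitive ?V ?E"
    by (rule quasi_transitive_map_graph[OF inj_to_nat quasi_transitive_adj])
  moreover have "\<not> periodic_coloring ?V ?E c" if "proper_edge_coloring ?E c" for c :: "nat set \<Rightarrow> nat"
    using not_periodic_coloring_adj[OF proper_edge_coloring_map_graph[OF inj_to_nat that]]
      periodic_coloring_map_graph[OF inj_to_nat simple_graph_adj]
    by blast
  ultimately show ?thesis
    by blast
qed

end
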